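(* Let $I\subseteq R$ be a good ideal. Suppose $\mathbb N^n$ is the disjoint union of finitely many cones $C_1,\dots,C_r$ such that $I_a=I_b$ whenever $a,b$ lie in the same cone $C_j$. Let $L$ be the maximum, over $j$, of the sum of the coordinates of the vertex of $C_j$, and assume that every zero-dimensional cone $C_j$ has vertex coordinate sum strictly less than $L$. Then $I^k$ is Ratliff--Rush (i.e. $\widetilde{I^k}=I^k$) for every integer $k\ge L+1$.
   Context: Let $\mathbb K$ be a field, $R=\mathbb K[x_1,\dots,x_n]$, $\mathfrak m=\langle x_1,\dots,x_n\rangle$, $\mathbb N=\{0,1,2,\dots\}$. A monomial $x_1^{\alpha_1}\cdots x_n^{\alpha_n}$ is identified with the point $(\alpha_1,\dots,\alpha_n)\in\mathbb N^n$. For a monomial ideal $I$, $G(I)$ denotes its (unique) minimal monomial generating set. If $I$ is an $\mathfrak m$-primary monomial ideal, then for each $i$ there is a unique $d_i\ge1$ with $x_i^{d_i}\in G(I)$; write $\mu_i=x_i^{d_i}$. For $(a_1,\dots,a_n)\in\mathbb N^n$ the box associated to $I$ is $B_{a_1,\dots,a_n}=([a_1d_1,(a_1+1)d_1]\times\cdots\times[a_nd_n,(a_n+1)d_n])\cap\mathbb N^n$; a monomial belongs to a box if its exponent vector does. An $\mathfrak m$-primary monomial ideal $I$ is called good if for every integer $l\ge1$, every element of $G(I^l)$ belongs to some box $B_{a_1,\dots,a_n}$ with $a_1+\dots+a_n=l-1$. For a good ideal $I$ and $a=(a_1,\dots,a_n)\in\mathbb N^n$, with $l=a_1+\dots+a_n+1$,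 define $I_{a}=I_{a_1,\dots,a_n}=\left\langle \frac{m}{\mu_1^{a_1}\cdots\mu_n^{a_n}} : m\in B_{a_1,\dots,a_n}\cap G(I^l)\right\rangle$. For $v\in\mathbb N^n$ and $S\subseteq\{1,\dots,n\}$, the cone with vertex $v$ and set of fixed coordinates $S$ is $\{c\in\mathbb N^n : c_i=v_i \text{ for } i\in S,\ c_i\ge v_i \text{ for } i\notin S\}$; its dimension is $n-|S|$. The Ratliff--Rush closure of a regular ideal $J$ is $\tilde J=\bigcup_{k\ge0}(J^{k+1}:J^k)$, and $J$ is Ratliff--Rush if $J=\tilde J$. *)

theory Defs
  imports Main "HOL-Library.Poly_Mapping" "HOL-Library.Function_Algebras"
begin

text \<open>Polynomial ring K[x_i : i in 'n] over a field, 'n a finite index type (n = CARD('n)).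
  Exponent vectors (points of N^n) are functions 'n => nat (pointwise addition);
  polynomials are finitely supported maps from exponent vectors to coefficients.\<close>

type_synonym ('n, 'k) mpoly = "('n \<Rightarrow> nat) \<Rightarrow>\<^sub>0 'k"

definition mono :: "('n \<Rightarrow> nat) \<Rightarrow> ('n, 'k::field) mpoly" where
  "mono \<alpha> = Poly_Mapping.single \<alpha> 1"

definition unitv :: "'n \<Rightarrow> 'n \<Rightarrow> nat" where
  "unitv i = (\<lambda>j. if j = i then 1 else 0)"

definition var :: "'n \<Rightarrow> ('n, 'k::field) mpoly" where
  "var i = mono (unitv i)"

definition ideal_gen :: "('n, 'k::field) mpoly set \<Rightarrow> ('n, 'k) mpoly set" where
  "ideal_gen S = {(\<Sum>g\<in>F. c g * g) | F c. finite F \<and> F \<subseteq> S}"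

definition is_ideal :: "('n, 'k::field) mpoly set \<Rightarrow> bool" where
  "is_ideal J \<longleftrightarrow> 0 \<in> J \<and> (\<forall>p\<in>J. \<forall>q\<in>J. p + q \<in> J) \<and> (\<forall>p\<in>J. \<forall>r. r * p \<in> J)"

definition monomial_ideal :: "('n, 'k::field) mpoly set \<Rightarrow> bool" where
  "monomial_ideal J \<longleftrightarrow> (\<exists>E. J = ideal_gen (mono ` E))"

definition max_ideal :: "('n, 'k::field) mpoly set" where
  "max_ideal = ideal_gen (range var)"

definition radical :: "('n, 'k::field) mpoly set \<Rightarrow> ('n, 'k) mpoly set" where
  "radical J = {p. \<exists>k. p ^ k \<in> J}"

definition m_primary :: "('n, 'k::field) mpoly set \<Rightarrow> bool" where
  "m_primary J \<longleftrightarrow> is_ideal J \<and> radical J = max_ideal"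

text \<open>G(J): exponents of the minimal monomial generators (monomials of J minimal
  with respect to divisibility, i.e. componentwise order of exponents).\<close>
definition mingens :: "('n, 'k::field) mpoly set \<Rightarrow> ('n \<Rightarrow> nat) set" where
  "mingens J = {\<alpha>. mono \<alpha> \<in> J \<and> (\<forall>\<beta>. mono \<beta> \<in> J \<and> (\<forall>i. \<beta> i \<le> \<alpha> i) \<longrightarrow> \<beta> = \<alpha>)}"

definition ideal_pow :: "('n, 'k::field) mpoly set \<Rightarrow> nat \<Rightarrow> ('n, 'k) mpoly set" where
  "ideal_pow J l = ideal_gen {prod_list xs | xs. length xs = l \<and> set xs \<subseteq> J}"

definition colon :: "('n, 'k::field) mpoly set \<Rightarrow> ('n, 'k) mpoly set \<Rightarrow> ('n, 'k) mpoly set" where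
  "colon A B = {p. \<forall>b\<in>B. p * b \<in> A}"

definition ratliff_rush :: "('n, 'k::field) mpoly set \<Rightarrow> ('n, 'k) mpoly set" where
  "ratliff_rush J = (\<Union>k. colon (ideal_pow J (k + 1)) (ideal_pow J k))"

definition dexp :: "('n, 'k::field) mpoly set \<Rightarrow> 'n \<Rightarrow> nat" where
  "dexp J i = (THE d. d \<ge> 1 \<and> (\<lambda>j. if j = i then d else 0) \<in> mingens J)"

definition box :: "('n, 'k::field) mpoly set \<Rightarrow> ('n \<Rightarrow> nat) \<Rightarrow> ('n \<Rightarrow> nat) set" where
  "box J a = {\<alpha>. \<forall>i. a i * dexp J i \<le> \<alpha> i \<and> \<alpha> i \<le> (a i + 1) * dexp J i}"

definition good_ideal :: "('n::finite, 'k::field) mpoly set \<Rightarrow> bool" where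
  "good_ideal J \<longleftrightarrow> monomial_ideal J \<and> m_primary J \<and>
     (\<forall>l\<ge>1. \<forall>\<alpha>\<in>mingens (ideal_pow J l). \<exists>a. (\<Sum>i\<in>UNIV. a i) = l - 1 \<and> \<alpha> \<in> box J a)"

text \<open>I_a: generated by m / (mu_1^{a_1} ... mu_n^{a_n}) for m in B_a \<inter> G(I^l), l = |a| + 1.\<close>
definition ideal_at :: "('n::finite, 'k::field) mpoly set \<Rightarrow> ('n \<Rightarrow> nat) \<Rightarrow> ('n, 'k) mpoly set" where
  "ideal_at J a = ideal_gen
     {mono (\<lambda>i. \<alpha> i - a i * dexp J i) | \<alpha>. \<alpha> \<in> box J a \<inter> mingens (ideal_pow J ((\<Sum>i\<in>UNIV. a i) + 1))}"

definition cone :: "('n \<Rightarrow> nat) \<Rightarrow> 'n set \<Rightarrow> ('n \<Rightarrow> nat) set" where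
  "cone v S = {c. (\<forall>i\<in>S. c i = v i) \<and> (\<forall>i. i \<notin> S \<longrightarrow> v i \<le> c i)}"

definition cone_dim :: "'n::finite set \<Rightarrow> nat" where
  "cone_dim S = card (UNIV :: 'n set) - card S"

end

theory Submission
  imports Defs
begin

text \<open>
  Only \<open>ratliff_rush (I^k) \<subseteq> I^k\<close> needs proof. If \<open>f (I^k)^s \<subseteq> (I^k)^(s+1)\<close>, then
  multiplying by \<open>\<mu>\<^sub>i^(ks) \<in> (I^k)^s\<close> shows that every monomial \<open>x^\<gamma>\<close> of \<open>f\<close> satisfies
  \<open>x^\<gamma> \<mu>\<^sub>i^N \<in> I^(k+N)\<close> for all \<open>i\<close>, where \<open>N = ks\<close>; it remains to cancel \<open>\<mu>\<^sub>i^N\<close>.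

  Let \<open>b = \<lfloor>\<gamma>/d\<rfloor>\<close> componentwise. By goodness, a minimal generator of \<open>I^(k+N)\<close> dividing
  \<open>x^\<gamma> \<mu>\<^sub>i^N\<close> lies in a box of index \<open>a \<le> b + N e\<^sub>i\<close> with \<open>|a| = k + N - 1\<close>, so
  \<open>|b| \<ge> k - 1\<close>. If \<open>|b| \<ge> k\<close>, then \<open>x^\<gamma>\<close> is divisible by a product of \<open>k\<close> of the \<open>\<mu>\<^sub>j\<close>.
  Otherwise \<open>|b| = k - 1 \<ge> L\<close>, so the cone containing \<open>b\<close> is not a point and has a free
  direction \<open>i\<close>. Then \<open>a = b + N e\<^sub>i\<close> lies in the same cone, so \<open>I\<^sub>a = I\<^sub>b\<close>, and the generator
  of \<open>I\<^sub>a\<close> obtained from the box \<open>a\<close> is divisible by a generator of \<open>I\<^sub>b\<close>; the latter comes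
  from a minimal generator of \<open>I^k\<close>, which therefore divides \<open>x^\<gamma>\<close>.
\<close>

lemma ideal_genI: "finite F \<Longrightarrow> F \<subseteq> S \<Longrightarrow> (\<Sum>g\<in>F. c g * g) \<in> ideal_gen S"
  unfolding ideal_gen_def by blast

lemma ideal_genE:
  assumes "p \<in> ideal_gen S"
  obtains F c where "finite F" "F \<subseteq> S" "p = (\<Sum>g\<in>F. c g * g)"
  using assms unfolding ideal_gen_def by blast

lemma is_idealI:
  assumes "0 \<in> J" "\<And>p q. p \<in> J \<Longrightarrow> q \<in> J \<Longrightarrow> p + q \<in> J" "\<And>p r. p \<in> J \<Longrightarrow> r * p \<in> J"
  shows "is_ideal (J :: ('n, 'k::field) mpoly set)"
  using assms unfolding is_ideal_def by blast

lemma is_ideal_mult_left: "is_ideal J \<Longrightarrow> p \<in> J \<Longrightarrow> r * p \<in> J"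
  by (simp add: is_ideal_def)

lemma is_ideal_mult_right: "is_ideal J \<Longrightarrow> p \<in> J \<Longrightarrow> p * r \<in> J"
  by (metis is_ideal_mult_left mult.commute)

lemma is_ideal_sum:
  assumes "is_ideal J" "\<And>x. x \<in> A \<Longrightarrow> f x \<in> J"
  shows "sum f A \<in> J"
proof (cases "finite A")
  case True
  then show ?thesis using assms(2)
    by (induction A rule: finite_induct) (use assms(1) in \<open>simp_all add: is_ideal_def\<close>)
qed (use assms(1) in \<open>simp add: is_ideal_def\<close>)

lemma is_ideal_ideal_gen: "is_ideal (ideal_gen S)"
proof (rule is_idealI)
  show "0 \<in> ideal_gen S" using ideal_genI[of "{}"] by simp
next
  fix p q assume p: "p \<in> ideal_gen S" and q: "q \<in> ideal_gen S"
  obtain F c where F: "finite F" "F \<subseteq> S" "p = (\<Sum>g\<in>F. c g * g)"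
    using p by (rule ideal_genE)
  obtain G d where G: "finite G" "G \<subseteq> S" "q = (\<Sum>g\<in>G. d g * g)"
    using q by (rule ideal_genE)
  have extend: "(\<Sum>g\<in>F \<union> G. (if g \<in> H then e g else 0) * g) = (\<Sum>g\<in>H. e g * g)"
    if "H \<subseteq> F \<union> G" for H e
    using that F G by (intro sum.mono_neutral_cong_right) auto
  have "p + q = (\<Sum>g\<in>F \<union> G. ((if g \<in> F then c g else 0) + (if g \<in> G then d g else 0)) * g)"
    unfolding distrib_right sum.distrib using F G extend[of F c] extend[of G d] by simp
  then show "p + q \<in> ideal_gen S"
    using F G ideal_genI[of "F \<union> G" S] by simp
next
  fix p r assume "p \<in> ideal_gen S"
  then obtain F c where F: "finite F" "F \<subseteq> S" "p = (\<Sum>g\<in>F. c g * g)"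
    by (rule ideal_genE)
  then have "r * p = (\<Sum>g\<in>F. (r * c g) * g)"
    by (simp add: sum_distrib_left mult.assoc)
  then show "r * p \<in> ideal_gen S"
    using F ideal_genI[of F S "\<lambda>g. r * c g"] by simp
qed

lemma ideal_gen_superset: "S \<subseteq> ideal_gen S"
proof
  fix g assume "g \<in> S"
  then show "g \<in> ideal_gen S"
    using ideal_genI[of "{g}" S "\<lambda>_. 1"] by simp
qed

lemma ideal_gen_minimal: "is_ideal J \<Longrightarrow> S \<subseteq> J \<Longrightarrow> ideal_gen S \<subseteq> J"
  by (auto elim!: ideal_genE intro!: is_ideal_sum is_ideal_mult_left)

lemma ideal_gen_mult:
  assumes "is_ideal T" "\<And>g h. g \<in> A \<Longrightarrow> h \<in> B \<Longrightarrow> g * h \<in> T"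
    and "p \<in> ideal_gen A" "q \<in> ideal_gen B"
  shows "p * q \<in> T"
proof -
  obtain F c where F: "F \<subseteq> A" "p = (\<Sum>g\<in>F. c g * g)"
    using assms(3) by (rule ideal_genE)
  obtain G d where G: "G \<subseteq> B" "q = (\<Sum>h\<in>G. d h * h)"
    using assms(4) by (rule ideal_genE)
  have "p * q = (\<Sum>g\<in>F. \<Sum>h\<in>G. (c g * d h) * (g * h))"
    unfolding F(2) G(2) sum_product by (simp add: ac_simps)
  also have "\<dots> \<in> T"
    using F(1) G(1)
    by (intro is_ideal_sum[OF assms(1)]) (blast intro: is_ideal_mult_left[OF assms(1) assms(2)])
  finally show ?thesis .
qed

lemma mono_0: "mono 0 = 1"
  unfolding mono_def by simp

lemma mono_add: "mono (\<alpha> + \<beta>) = mono \<alpha> * mono \<beta>"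
  unfolding mono_def by (simp add: mult_single)

lemma mono_power: "mono \<alpha> ^ s = mono (\<lambda>j. s * \<alpha> j)"
proof (induction s)
  case 0
  then show ?case using mono_0 by (simp add: zero_fun_def)
next
  case (Suc s)
  have "(\<lambda>j. Suc s * \<alpha> j) = \<alpha> + (\<lambda>j. s * \<alpha> j)" by (simp add: fun_eq_iff)
  then show ?case using Suc by (simp add: mono_add)
qed

lemma keys_mono [simp]: "Poly_Mapping.keys (mono \<alpha>) = {\<alpha>}"
  unfolding mono_def by simp

lemma poly_eq_sum_monos:
  "p = (\<Sum>\<beta>\<in>Poly_Mapping.keys p. Poly_Mapping.single 0 (Poly_Mapping.lookup p \<beta>) * mono \<beta>)"
proof (rule poly_mapping_eqI)
  fix \<gamma>
  show "Poly_Mapping.lookup p \<gamma> = Poly_Mapping.lookup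
    (\<Sum>\<beta>\<in>Poly_Mapping.keys p. Poly_Mapping.single 0 (Poly_Mapping.lookup p \<beta>) * mono \<beta>) \<gamma>"
    by (simp add: lookup_sum mono_def mult_single lookup_single when_def in_keys_iff)
qed

lemma in_ideal_if_monos_in:
  "is_ideal J \<Longrightarrow> (\<And>\<beta>. \<beta> \<in> Poly_Mapping.keys p \<Longrightarrow> mono \<beta> \<in> J) \<Longrightarrow> p \<in> J"
  by (subst poly_eq_sum_monos) (auto intro!: is_ideal_sum is_ideal_mult_left)

lemma keys_mult_mono:
  assumes "\<beta> \<in> Poly_Mapping.keys p"
  shows "\<beta> + \<delta> \<in> Poly_Mapping.keys (p * mono \<delta>)"
proof -
  have "p * mono \<delta> = (\<Sum>\<beta>'\<in>Poly_Mapping.keys p. Poly_Mapping.single (\<beta>' + \<delta>) (Poly_Mapping.lookup p \<beta>'))"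
    by (subst poly_eq_sum_monos) (simp add: sum_distrib_right mono_def mult_single)
  then have "Poly_Mapping.lookup (p * mono \<delta>) (\<beta> + \<delta>) = Poly_Mapping.lookup p \<beta>"
    using assms by (simp add: lookup_sum lookup_single when_def)
  then show ?thesis
    using assms by (simp add: in_keys_iff)
qed

lemma mono_in_ideal_mono:
  assumes "is_ideal J" "mono \<alpha> \<in> J" "\<alpha> \<le> \<beta>"
  shows "mono \<beta> \<in> J"
proof -
  have "\<beta> = (\<beta> - \<alpha>) + \<alpha>"
    using assms(3) by (simp add: le_fun_def fun_eq_iff)
  then have "mono \<beta> = mono (\<beta> - \<alpha>) * mono \<alpha>"
    by (metis mono_add)
  then show ?thesis
    using assms(1,2) is_ideal_mult_left by metis
qed

lemma is_ideal_supported_on: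
  assumes "\<And>\<alpha> \<beta>. \<beta> \<in> U \<Longrightarrow> \<alpha> + \<beta> \<in> U"
  shows "is_ideal {p :: ('n, 'k::field) mpoly. Poly_Mapping.keys p \<subseteq> U}"
proof (rule is_idealI)
  fix p q :: "('n, 'k) mpoly"
  assume "p \<in> {p. Poly_Mapping.keys p \<subseteq> U}" "q \<in> {p. Poly_Mapping.keys p \<subseteq> U}"
  then show "p + q \<in> {p. Poly_Mapping.keys p \<subseteq> U}"
    using Poly_Mapping.keys_add[of p q] by auto
next
  fix p r :: "('n, 'k) mpoly"
  assume "p \<in> {p. Poly_Mapping.keys p \<subseteq> U}"
  then show "r * p \<in> {p. Poly_Mapping.keys p \<subseteq> U}"
    using Poly_Mapping.keys_mult[of r p] assms by blast
qed simp

lemma keys_monomial_ideal: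
  fixes p :: "('n, 'k::field) mpoly"
  assumes "p \<in> ideal_gen (mono ` E)" "\<beta> \<in> Poly_Mapping.keys p"
  shows "\<exists>\<alpha>\<in>E. \<alpha> \<le> \<beta>"
proof -
  let ?U = "{\<beta>. \<exists>\<alpha>\<in>E. \<alpha> \<le> \<beta>}"
  have "is_ideal {p :: ('n, 'k) mpoly. Poly_Mapping.keys p \<subseteq> ?U}"
    by (rule is_ideal_supported_on) (auto simp: le_fun_def intro: trans_le_add2)
  then have "ideal_gen (mono ` E) \<subseteq> {p :: ('n, 'k) mpoly. Poly_Mapping.keys p \<subseteq> ?U}"
    by (rule ideal_gen_minimal) auto
  then show ?thesis
    using assms by blast
qed

lemma mono_key_in_monomial_ideal:
  assumes "p \<in> ideal_gen (mono ` E)" "\<beta> \<in> Poly_Mapping.keys p"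
  shows "mono \<beta> \<in> ideal_gen (mono ` E)"
proof -
  obtain \<alpha> where "\<alpha> \<in> E" "\<alpha> \<le> \<beta>"
    using keys_monomial_ideal[OF assms] by blast
  then show ?thesis
    using mono_in_ideal_mono[OF is_ideal_ideal_gen] ideal_gen_superset by blast
qed

lemma prod_list_in_ideal_pow: "length xs = l \<Longrightarrow> set xs \<subseteq> J \<Longrightarrow> prod_list xs \<in> ideal_pow J l"
  unfolding ideal_pow_def by (rule subsetD[OF ideal_gen_superset]) blast

lemma is_ideal_ideal_pow: "is_ideal (ideal_pow J l)"
  unfolding ideal_pow_def by (rule is_ideal_ideal_gen)

lemma in_ideal_pow_1: "p \<in> J \<Longrightarrow> p \<in> ideal_pow J 1"
  using prod_list_in_ideal_pow[of "[p]"] by simp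

lemma power_in_ideal_pow: "p \<in> J \<Longrightarrow> p ^ s \<in> ideal_pow J s"
  using prod_list_in_ideal_pow[of "replicate s p" s J] by (simp add: prod_list_replicate set_replicate_conv_if)

lemma ideal_pow_mult:
  assumes "p \<in> ideal_pow J a" "q \<in> ideal_pow J b"
  shows "p * q \<in> ideal_pow J (a + b)"
proof (rule ideal_gen_mult[OF is_ideal_ideal_pow])
  fix g h
  assume "g \<in> {prod_list xs |xs. length xs = a \<and> set xs \<subseteq> J}"
    and "h \<in> {prod_list ys |ys. length ys = b \<and> set ys \<subseteq> J}"
  then obtain xs ys where "g = prod_list xs" "length xs = a" "set xs \<subseteq> J"
    "h = prod_list ys" "length ys = b" "set ys \<subseteq> J"
    by blast
  then show "g * h \<in> ideal_pow J (a + b)"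
    using prod_list_in_ideal_pow[of "xs @ ys" "a + b" J] by simp
qed (use assms in \<open>simp_all add: ideal_pow_def\<close>)

lemma ideal_pow_ideal_pow_subset: "ideal_pow (ideal_pow J k) s \<subseteq> ideal_pow J (k * s)"
proof -
  have "prod_list xs \<in> ideal_pow J (k * length xs)" if "set xs \<subseteq> ideal_pow J k" for xs
    using that
  proof (induction xs)
    case Nil
    then show ?case using prod_list_in_ideal_pow[of "[]" 0 J] by simp
  next
    case (Cons x xs)
    then show ?case using ideal_pow_mult[of x J k "prod_list xs"] by simp
  qed
  then show ?thesis
    unfolding ideal_pow_def[of "ideal_pow J k"]
    by (intro ideal_gen_minimal[OF is_ideal_ideal_pow]) auto
qed

lemma mono_key_in_ideal_pow:
  fixes p :: "('n, 'k::field) mpoly"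
  assumes I: "I = ideal_gen (mono ` E)" and "p \<in> ideal_pow I m" "\<beta> \<in> Poly_Mapping.keys p"
  shows "mono \<beta> \<in> ideal_pow I m"
proof -
  have keys_prod: "Poly_Mapping.keys (prod_list xs) \<subseteq> {\<beta>. mono \<beta> \<in> ideal_pow I (length xs)}"
    if "set xs \<subseteq> I" for xs :: "('n, 'k) mpoly list"
    using that
  proof (induction xs)
    case Nil
    then show ?case using prod_list_in_ideal_pow[of "[]" 0 I] by (simp add: mono_0)
  next
    case (Cons x xs)
    show ?case
    proof
      fix \<beta> assume "\<beta> \<in> Poly_Mapping.keys (prod_list (x # xs))"
      then obtain \<alpha> \<alpha>' where \<beta>: "\<beta> = \<alpha> + \<alpha>'" "\<alpha> \<in> Poly_Mapping.keys x"
        "\<alpha>' \<in> Poly_Mapping.keys (prod_list xs)"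
        using Poly_Mapping.keys_mult[of x "prod_list xs"] by auto
      have "mono \<alpha> \<in> ideal_pow I 1"
        using Cons.prems \<beta>(2) I mono_key_in_monomial_ideal in_ideal_pow_1
        by (metis insert_subset list.set(2))
      moreover have "mono \<alpha>' \<in> ideal_pow I (length xs)"
        using Cons \<beta>(3) by auto
      ultimately show "\<beta> \<in> {\<beta>. mono \<beta> \<in> ideal_pow I (length (x # xs))}"
        using ideal_pow_mult \<beta>(1) by (fastforce simp: mono_add)
    qed
  qed
  define U where "U = {\<beta>. mono \<beta> \<in> ideal_pow I m}"
  have "is_ideal {p :: ('n, 'k) mpoly. Poly_Mapping.keys p \<subseteq> U}"
    unfolding U_def
    by (rule is_ideal_supported_on) (auto simp: mono_add intro: is_ideal_mult_left[OF is_ideal_ideal_pow])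
  moreover have "{prod_list xs |xs. length xs = m \<and> set xs \<subseteq> I} \<subseteq> {p. Poly_Mapping.keys p \<subseteq> U}"
    using keys_prod unfolding U_def by auto
  ultimately have "ideal_pow I m \<subseteq> {p. Poly_Mapping.keys p \<subseteq> U}"
    unfolding ideal_pow_def[of I m] by (rule ideal_gen_minimal)
  then show ?thesis
    using assms(2,3) unfolding U_def by blast
qed

lemma mono_in_if_mingens: "\<alpha> \<in> mingens J \<Longrightarrow> mono \<alpha> \<in> J"
  by (simp add: mingens_def)

lemma mingens_antichain:
  assumes "\<alpha> \<in> mingens J" "\<beta> \<in> mingens J" "\<alpha> \<le> \<beta>"
  shows "\<alpha> = \<beta>"
proof -
  have "\<forall>\<gamma>. mono \<gamma> \<in> J \<and> (\<forall>i. \<gamma> i \<le> \<beta> i) \<longrightarrow> \<gamma> = \<beta>"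
    using assms(2) by (simp add: mingens_def)
  then show ?thesis
    using assms(1,3) by (simp add: mingens_def le_fun_def)
qed

lemma eq_if_le_and_sum_eq:
  fixes \<alpha> \<beta> :: "'n::finite \<Rightarrow> nat"
  assumes "\<alpha> \<le> \<beta>" "(\<Sum>i\<in>UNIV. \<alpha> i) = (\<Sum>i\<in>UNIV. \<beta> i)"
  shows "\<alpha> = \<beta>"
  using sum_mono_inv[OF assms(2)] assms(1) by (auto simp: le_fun_def)

lemma exists_mingens_le:
  fixes J :: "('n::finite, 'k::field) mpoly set"
  assumes "mono \<gamma> \<in> J"
  shows "\<exists>\<alpha>\<in>mingens J. \<alpha> \<le> \<gamma>"
proof -
  define P where "P \<beta> \<longleftrightarrow> mono \<beta> \<in> J \<and> \<beta> \<le> \<gamma>" for \<beta>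
  have "P \<gamma>"
    using assms by (simp add: P_def)
  then obtain \<alpha> where \<alpha>: "P \<alpha>" and least: "\<And>\<beta>. P \<beta> \<Longrightarrow> (\<Sum>i\<in>UNIV. \<alpha> i) \<le> (\<Sum>i\<in>UNIV. \<beta> i)"
    using ex_has_least_nat[of P \<gamma> "\<lambda>\<beta>. \<Sum>i\<in>UNIV. \<beta> i"] by blast
  have "\<beta> = \<alpha>" if "mono \<beta> \<in> J" "\<beta> \<le> \<alpha>" for \<beta>
  proof (rule eq_if_le_and_sum_eq)
    have "P \<beta>"
      using that \<alpha> order.trans[OF that(2)] by (simp add: P_def)
    then have "(\<Sum>i\<in>UNIV. \<alpha> i) \<le> (\<Sum>i\<in>UNIV. \<beta> i)"
      by (rule least)
    moreover have "(\<Sum>i\<in>UNIV. \<beta> i) \<le> (\<Sum>i\<in>UNIV. \<alpha> i)"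
      using that(2) by (intro sum_mono) (simp add: le_fun_def)
    ultimately show "(\<Sum>i\<in>UNIV. \<beta> i) = (\<Sum>i\<in>UNIV. \<alpha> i)"
      by simp
  qed (fact that(2))
  then have "\<alpha> \<in> mingens J"
    using \<alpha> by (simp add: P_def mingens_def le_fun_def)
  then show ?thesis
    using \<alpha> by (auto simp: P_def)
qed

lemma good_ideal_monomial:
  assumes "good_ideal I"
  obtains E where "I = ideal_gen (mono ` E)"
  using assms unfolding good_ideal_def monomial_ideal_def by blast

lemma good_ideal_radical: "good_ideal I \<Longrightarrow> radical I = max_ideal"
  unfolding good_ideal_def m_primary_def by blast

lemma good_ideal_mingens_in_box:
  "good_ideal I \<Longrightarrow> 1 \<le> l \<Longrightarrow> \<alpha> \<in> mingens (ideal_pow I l) \<Longrightarrow>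
    \<exists>a. (\<Sum>i\<in>UNIV. a i) = l - 1 \<and> \<alpha> \<in> box I a"
  unfolding good_ideal_def by blast

lemma good_ideal_one_notin:
  assumes "good_ideal (I :: ('n::finite, 'k::field) mpoly set)"
  shows "mono 0 \<notin> I"
proof
  assume "mono 0 \<in> I"
  then have "mono 0 ^ 1 \<in> I"
    by simp
  then have "mono 0 \<in> radical I"
    unfolding radical_def by blast
  moreover have "(range var :: ('n, 'k) mpoly set) = mono ` range unitv"
    unfolding var_def by (rule image_image[symmetric])
  ultimately have "(mono 0 :: ('n, 'k) mpoly) \<in> ideal_gen (mono ` range unitv)"
    using good_ideal_radical[OF assms] unfolding max_ideal_def by simp
  then have "(0 :: 'n \<Rightarrow> nat) \<in> range unitv"
    using keys_monomial_ideal[of "mono 0 :: ('n, 'k) mpoly" "range unitv" 0] by simp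
  then obtain i :: 'n where "unitv i = 0"
    by auto
  then have "unitv i i = 0"
    by simp
  then show False
    by (simp add: unitv_def)
qed

definition axis :: "'n \<Rightarrow> nat \<Rightarrow> 'n \<Rightarrow> nat" where
  "axis i m = (\<lambda>j. if j = i then m else 0)"

lemma sum_axis [simp]: "(\<Sum>j\<in>UNIV. axis (i :: 'n::finite) m j) = m"
  by (simp add: axis_def sum.delta)

lemma good_ideal_pure_power_in:
  assumes "good_ideal (I :: ('n::finite, 'k::field) mpoly set)"
  obtains m where "mono (axis i m) \<in> I"
proof -
  have "var i \<in> (max_ideal :: ('n, 'k) mpoly set)"
    unfolding max_ideal_def using ideal_gen_superset by blast
  then obtain m where "(var i :: ('n, 'k) mpoly) ^ m \<in> I"
    using good_ideal_radical[OF assms] unfolding radical_def by blast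
  moreover have "(\<lambda>j. m * unitv i j) = axis i m"
    by (simp add: axis_def unitv_def fun_eq_iff)
  then have "(var i :: ('n, 'k) mpoly) ^ m = mono (axis i m)"
    unfolding var_def mono_power by simp
  ultimately show ?thesis
    using that by simp
qed

lemma good_ideal_dexp:
  assumes "good_ideal (I :: ('n::finite, 'k::field) mpoly set)"
  shows "1 \<le> dexp I i" and "axis i (dexp I i) \<in> mingens I"
proof -
  obtain m where "mono (axis i m) \<in> I"
    using good_ideal_pure_power_in[OF assms] .
  then obtain \<alpha> where \<alpha>: "\<alpha> \<in> mingens I" "\<alpha> \<le> axis i m"
    using exists_mingens_le by blast
  have "\<alpha> = axis i (\<alpha> i)"
  proof
    fix j
    show "\<alpha> j = axis i (\<alpha> i) j"
      using le_funD[OF \<alpha>(2), of j] by (simp add: axis_def split: if_splits)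
  qed
  then obtain d where d: "axis i d \<in> mingens I"
    using \<alpha>(1) by (metis (no_types))
  have "d \<noteq> 0"
  proof
    assume "d = 0"
    then have "axis i d = 0"
      by (simp add: axis_def fun_eq_iff)
    then show False
      using mono_in_if_mingens[OF d] good_ideal_one_notin[OF assms] by simp
  qed
  have unique: "d' = d" if "axis i d' \<in> mingens I" for d'
  proof -
    have "axis i d' \<le> axis i d \<or> axis i d \<le> axis i d'"
      by (cases "d' \<le> d") (auto simp: le_fun_def axis_def)
    then have "axis i d' = axis i d"
      using mingens_antichain[OF that d] mingens_antichain[OF d that] by auto
    then have "axis i d' i = axis i d i"
      by simp
    then show ?thesis
      by (simp add: axis_def)
  qed
  have "dexp I i = d"
    unfolding dexp_def axis_def[symmetric]
    by (rule the_equality) (use \<open>d \<noteq> 0\<close> d in simp, use unique in blast)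
  then show "1 \<le> dexp I i" "axis i (dexp I i) \<in> mingens I"
    using \<open>d \<noteq> 0\<close> d by simp_all
qed

lemma good_ideal_dexp_multiple_in_pow:
  assumes "good_ideal (I :: ('n::finite, 'k::field) mpoly set)"
  shows "mono (\<lambda>j. c j * dexp I j) \<in> ideal_pow I (\<Sum>j\<in>UNIV. c j)"
proof (induction "\<Sum>j\<in>UNIV. c j" arbitrary: c)
  case 0
  then have "(\<lambda>j. c j * dexp I j) = 0"
    by (simp add: fun_eq_iff)
  then show ?case
    using prod_list_in_ideal_pow[of "[]" 0 I] 0 by (simp add: mono_0)
next
  case (Suc n)
  then obtain i where "0 < c i"
    using sum.neutral[of UNIV c] by (metis gr0I nat.distinct(1))
  define c' where "c' = c(i := c i - 1)"
  have c: "c = c' + axis i 1"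
    using \<open>0 < c i\<close> by (auto simp: c'_def axis_def fun_eq_iff)
  then have "n = (\<Sum>j\<in>UNIV. c' j)"
    using Suc.hyps(2) by (simp add: sum.distrib)
  then have "mono (\<lambda>j. c' j * dexp I j) \<in> ideal_pow I n"
    using Suc.hyps(1)[of c'] by simp
  with in_ideal_pow_1[OF mono_in_if_mingens[OF good_ideal_dexp(2)[OF assms]]]
  have "mono (axis i (dexp I i)) * mono (\<lambda>j. c' j * dexp I j) \<in> ideal_pow I (1 + n)"
    by (rule ideal_pow_mult)
  moreover have "(\<lambda>j. c j * dexp I j) = axis i (dexp I i) + (\<lambda>j. c' j * dexp I j)"
    by (subst c) (simp add: axis_def fun_eq_iff)
  ultimately show ?case
    using Suc.hyps(2) by (simp add: mono_add)
qed

lemma dexp_pos: "good_ideal I \<Longrightarrow> 0 < dexp I i"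
  using good_ideal_dexp(1)[of I i] by simp

lemma mono_axis_dexp_multiple_in_pow:
  assumes "good_ideal I"
  shows "mono (axis i (k * dexp I i)) \<in> ideal_pow I k"
proof -
  have "(\<lambda>j. axis i k j * dexp I j) = axis i (k * dexp I i)"
    by (simp add: axis_def fun_eq_iff)
  then show ?thesis
    using good_ideal_dexp_multiple_in_pow[OF assms, of "axis i k"] by simp
qed

definition box_index :: "('n, 'k::field) mpoly set \<Rightarrow> ('n \<Rightarrow> nat) \<Rightarrow> 'n \<Rightarrow> nat" where
  "box_index I \<gamma> = (\<lambda>j. \<gamma> j div dexp I j)"

lemma box_le_box_index:
  assumes "good_ideal I" "\<alpha> \<in> box I a" "\<alpha> \<le> \<beta>"
  shows "a \<le> box_index I \<beta>"
proof (rule le_funI)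
  fix j
  have "a j * dexp I j \<le> \<beta> j"
    using assms(2) le_funD[OF assms(3), of j] by (auto simp: box_def intro: order_trans)
  then show "a j \<le> box_index I \<beta> j"
    unfolding box_index_def using less_eq_div_iff_mult_less_eq[OF dexp_pos[OF assms(1)]] by simp
qed

lemma box_index_add_axis:
  "good_ideal I \<Longrightarrow> box_index I (\<gamma> + axis i (N * dexp I i)) = box_index I \<gamma> + axis i N"
  using dexp_pos[of I i] by (simp add: box_index_def axis_def fun_eq_iff)

lemma exists_le_sum_eq:
  fixes b :: "'n::finite \<Rightarrow> nat"
  assumes "k \<le> (\<Sum>j\<in>UNIV. b j)"
  shows "\<exists>c\<le>b. (\<Sum>j\<in>UNIV. c j) = k"
  using assms
proof (induction k)
  case 0
  then show ?case by (auto simp: le_fun_def intro!: exI[of _ 0])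
next
  case (Suc k)
  then obtain c where c: "c \<le> b" "(\<Sum>j\<in>UNIV. c j) = k"
    by auto
  have "\<exists>j. c j < b j"
  proof (rule ccontr)
    assume "\<nexists>j. c j < b j"
    then have "(\<Sum>j\<in>UNIV. b j) \<le> (\<Sum>j\<in>UNIV. c j)"
      by (intro sum_mono) (simp add: not_less)
    then show False
      using Suc.prems c(2) by simp
  qed
  then obtain j where "c j < b j"
    by blast
  then have "c + axis j 1 \<le> b" "(\<Sum>i\<in>UNIV. (c + axis j 1) i) = Suc k"
    using c by (auto simp: le_fun_def axis_def sum.distrib)
  then show ?case
    by blast
qed

lemma mono_in_ideal_pow_if_box_index_ge:
  assumes "good_ideal I" "k \<le> (\<Sum>j\<in>UNIV. box_index I \<gamma> j)"
  shows "mono \<gamma> \<in> ideal_pow I k"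
proof -
  obtain c where c: "c \<le> box_index I \<gamma>" "(\<Sum>j\<in>UNIV. c j) = k"
    using exists_le_sum_eq[OF assms(2)] by blast
  have "(\<lambda>j. c j * dexp I j) \<le> \<gamma>"
  proof (rule le_funI)
    fix j
    have "c j * dexp I j \<le> box_index I \<gamma> j * dexp I j"
      using le_funD[OF c(1)] by simp
    also have "\<dots> \<le> \<gamma> j"
      by (simp add: box_index_def)
    finally show "c j * dexp I j \<le> \<gamma> j" .
  qed
  then show ?thesis
    using good_ideal_dexp_multiple_in_pow[OF assms(1), of c] c(2)
    by (auto intro: mono_in_ideal_mono[OF is_ideal_ideal_pow])
qed

lemma shifted_mingens_box:
  assumes good: "good_ideal I" and "1 \<le> k"
    and "mono (\<gamma> + axis i (N * dexp I i)) \<in> ideal_pow I (k + N)"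
  obtains \<alpha> a where "\<alpha> \<in> mingens (ideal_pow I (k + N))" "\<alpha> \<le> \<gamma> + axis i (N * dexp I i)"
    "\<alpha> \<in> box I a" "(\<Sum>j\<in>UNIV. a j) = k + N - 1" "a \<le> box_index I \<gamma> + axis i N"
proof -
  obtain \<alpha> where \<alpha>: "\<alpha> \<in> mingens (ideal_pow I (k + N))" "\<alpha> \<le> \<gamma> + axis i (N * dexp I i)"
    using exists_mingens_le[OF assms(3)] by blast
  moreover obtain a where "(\<Sum>j\<in>UNIV. a j) = k + N - 1" "\<alpha> \<in> box I a"
    using good_ideal_mingens_in_box[OF good _ \<alpha>(1)] \<open>1 \<le> k\<close> by auto
  moreover have "a \<le> box_index I \<gamma> + axis i N"
    using box_le_box_index[OF good \<open>\<alpha> \<in> box I a\<close> \<alpha>(2)] box_index_add_axis[OF good] by simp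
  ultimately show ?thesis
    using that by blast
qed

lemma sum_box_index_ge:
  assumes good: "good_ideal I" and "1 \<le> k"
    and "mono (\<gamma> + axis i (N * dexp I i)) \<in> ideal_pow I (k + N)"
  shows "k - 1 \<le> (\<Sum>j\<in>UNIV. box_index I \<gamma> j)"
proof -
  obtain a where "(\<Sum>j\<in>UNIV. a j) = k + N - 1" "a \<le> box_index I \<gamma> + axis i N"
    using shifted_mingens_box[OF assms] by blast
  moreover have "(\<Sum>j\<in>UNIV. a j) \<le> (\<Sum>j\<in>UNIV. (box_index I \<gamma> + axis i N) j)"
    using calculation(2) by (intro sum_mono) (simp add: le_fun_def)
  ultimately show ?thesis
    using \<open>1 \<le> k\<close> by (simp add: sum.distrib)
qed

lemma mono_in_ideal_at:
  assumes "\<alpha> \<in> box I a" "\<alpha> \<in> mingens (ideal_pow I ((\<Sum>j\<in>UNIV. a j) + 1))"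
  shows "mono (\<lambda>j. \<alpha> j - a j * dexp I j) \<in> ideal_at I a"
  unfolding ideal_at_def using assms by (intro subsetD[OF ideal_gen_superset]) blast

lemma mono_in_ideal_atE:
  fixes I :: "('n::finite, 'k::field) mpoly set"
  assumes "mono \<delta> \<in> ideal_at I b"
  obtains \<alpha> where "\<alpha> \<in> box I b" "\<alpha> \<in> mingens (ideal_pow I ((\<Sum>j\<in>UNIV. b j) + 1))"
    "(\<lambda>j. \<alpha> j - b j * dexp I j) \<le> \<delta>"
proof -
  let ?G = "box I b \<inter> mingens (ideal_pow I ((\<Sum>j\<in>UNIV. b j) + 1))"
  have eq: "ideal_at I b = ideal_gen (mono ` (\<lambda>\<alpha> j. \<alpha> j - b j * dexp I j) ` ?G)"
    unfolding ideal_at_def by (simp add: setcompr_eq_image image_image Int_def)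
  have "\<exists>\<delta>'\<in>(\<lambda>\<alpha> j. \<alpha> j - b j * dexp I j) ` ?G. \<delta>' \<le> \<delta>"
    by (rule keys_monomial_ideal[of "mono \<delta> :: ('n, 'k) mpoly"]) (use assms eq in simp_all)
  then show ?thesis
    using that by blast
qed

lemma mono_in_ideal_pow_if_ideal_at_shift_eq:
  fixes I :: "('n::finite, 'k::field) mpoly set"
  assumes good: "good_ideal I" and "1 \<le> k"
    and sum_b: "(\<Sum>j\<in>UNIV. box_index I \<gamma> j) = k - 1"
    and shift: "mono (\<gamma> + axis i (N * dexp I i)) \<in> ideal_pow I (k + N)"
    and eq: "ideal_at I (box_index I \<gamma> + axis i N) = ideal_at I (box_index I \<gamma>)"
  shows "mono \<gamma> \<in> ideal_pow I k"
proof -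
  define b where "b = box_index I \<gamma>"
  obtain \<alpha> a where \<alpha>: "\<alpha> \<in> mingens (ideal_pow I (k + N))" "\<alpha> \<le> \<gamma> + axis i (N * dexp I i)"
      "\<alpha> \<in> box I a" "(\<Sum>j\<in>UNIV. a j) = k + N - 1" "a \<le> b + axis i N"
    using shifted_mingens_box[OF good \<open>1 \<le> k\<close> shift] unfolding b_def by blast
  have a: "a = b + axis i N"
    using eq_if_le_and_sum_eq[OF \<alpha>(5)] \<alpha>(4) sum_b \<open>1 \<le> k\<close> by (simp add: b_def sum.distrib)
  have "mono (\<lambda>j. \<alpha> j - a j * dexp I j) \<in> ideal_at I a"
    using mono_in_ideal_at[OF \<alpha>(3)] \<alpha>(1,4) \<open>1 \<le> k\<close> by simp
  then have "mono (\<lambda>j. \<alpha> j - a j * dexp I j) \<in> ideal_at I b"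
    using eq unfolding a b_def by simp
  then obtain \<alpha>' where \<alpha>': "\<alpha>' \<in> box I b" "\<alpha>' \<in> mingens (ideal_pow I ((\<Sum>j\<in>UNIV. b j) + 1))"
    "(\<lambda>j. \<alpha>' j - b j * dexp I j) \<le> (\<lambda>j. \<alpha> j - a j * dexp I j)"
    by (rule mono_in_ideal_atE)
  have "mono \<alpha>' \<in> ideal_pow I k"
    using mono_in_if_mingens[OF \<alpha>'(2)] sum_b \<open>1 \<le> k\<close> unfolding b_def by simp
  moreover have "\<alpha>' \<le> \<gamma>"
  proof (rule le_funI)
    fix j
    have "b j * dexp I j \<le> \<alpha>' j" "a j * dexp I j \<le> \<alpha> j"
      using \<alpha>'(1) \<alpha>(3) by (simp_all add: box_def)
    moreover have "\<alpha>' j - b j * dexp I j \<le> \<alpha> j - a j * dexp I j"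
      using le_funD[OF \<alpha>'(3)] by simp
    moreover have "\<alpha> j \<le> \<gamma> j + axis i (N * dexp I i) j"
      using le_funD[OF \<alpha>(2)] by simp
    moreover have "a j * dexp I j = b j * dexp I j + axis i (N * dexp I i) j"
      unfolding a by (simp add: axis_def algebra_simps)
    ultimately show "\<alpha>' j \<le> \<gamma> j"
      by linarith
  qed
  ultimately show ?thesis
    by (rule mono_in_ideal_mono[OF is_ideal_ideal_pow])
qed

lemma cone_add_axis: "b \<in> cone v S \<Longrightarrow> i \<notin> S \<Longrightarrow> b + axis i N \<in> cone v S"
  by (auto simp: cone_def axis_def trans_le_add1)

lemma cone_UNIV: "cone v UNIV = {v}"
  by (auto simp: cone_def)

lemma cone_dim_eq_0_iff: "cone_dim S = 0 \<longleftrightarrow> S = (UNIV :: 'n::finite set)"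
  unfolding cone_dim_def using card_seteq[of UNIV S] card_mono[of UNIV S] by auto

lemma cone_with_free_direction:
  fixes v :: "nat \<Rightarrow> 'n::finite \<Rightarrow> nat"
  assumes cover: "(\<Union>j<r. cone (v j) (S j)) = UNIV"
    and zero_dim: "\<And>j. j < r \<Longrightarrow> cone_dim (S j) = 0 \<Longrightarrow> (\<Sum>i\<in>UNIV. v j i) < L"
    and "L \<le> (\<Sum>i\<in>UNIV. b i)"
  obtains j i where "j < r" "b \<in> cone (v j) (S j)" "i \<notin> S j"
proof -
  have "b \<in> (\<Union>j<r. cone (v j) (S j))"
    using cover by simp
  then obtain j where j: "j < r" "b \<in> cone (v j) (S j)"
    by blast
  have "S j \<noteq> UNIV"
  proof
    assume "S j = UNIV"
    then have "b = v j" "cone_dim (S j) = 0"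
      using j(2) by (simp_all add: cone_UNIV cone_dim_eq_0_iff)
    then show False
      using zero_dim[OF j(1)] assms(3) by simp
  qed
  then show ?thesis
    using that j by blast
qed

lemma mono_in_ideal_pow_if_shifts_in:
  fixes I :: "('n::finite, 'k::field) mpoly set"
    and v :: "nat \<Rightarrow> 'n \<Rightarrow> nat"
  assumes good: "good_ideal I"
    and cover: "(\<Union>j<r. cone (v j) (S j)) = UNIV"
    and const: "\<And>j a b. j < r \<Longrightarrow> a \<in> cone (v j) (S j) \<Longrightarrow> b \<in> cone (v j) (S j) \<Longrightarrow> ideal_at I a = ideal_at I b"
    and zero_dim: "\<And>j. j < r \<Longrightarrow> cone_dim (S j) = 0 \<Longrightarrow> (\<Sum>i\<in>UNIV. v j i) < L"
    and k: "L + 1 \<le> k"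
    and shifts: "\<And>i. mono (\<gamma> + axis i (N * dexp I i)) \<in> ideal_pow I (k + N)"
  shows "mono \<gamma> \<in> ideal_pow I k"
proof (cases "k \<le> (\<Sum>j\<in>UNIV. box_index I \<gamma> j)")
  case True
  then show ?thesis
    by (rule mono_in_ideal_pow_if_box_index_ge[OF good])
next
  case False
  have "k - 1 \<le> (\<Sum>j\<in>UNIV. box_index I \<gamma> j)"
    by (rule sum_box_index_ge[OF good _ shifts]) (use k in simp)
  with False have sum_b: "(\<Sum>j\<in>UNIV. box_index I \<gamma> j) = k - 1"
    by simp
  with k have "L \<le> (\<Sum>j\<in>UNIV. box_index I \<gamma> j)"
    by simp
  then obtain j i where j: "j < r" "box_index I \<gamma> \<in> cone (v j) (S j)" "i \<notin> S j"
    using cone_with_free_direction[OF cover zero_dim] by blast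
  have "ideal_at I (box_index I \<gamma> + axis i N) = ideal_at I (box_index I \<gamma>)"
    using const[OF j(1) cone_add_axis[OF j(2,3)] j(2)] .
  then show ?thesis
    using mono_in_ideal_pow_if_ideal_at_shift_eq[OF good _ sum_b shifts] k by simp
qed

lemma ideal_subset_ratliff_rush: "J \<subseteq> ratliff_rush J"
proof
  fix f assume "f \<in> J"
  then have "f * g \<in> ideal_pow J 1" for g
    using in_ideal_pow_1 is_ideal_mult_right[OF is_ideal_ideal_pow] by blast
  then have "f \<in> colon (ideal_pow J (0 + 1)) (ideal_pow J 0)"
    by (simp add: colon_def)
  then show "f \<in> ratliff_rush J"
    unfolding ratliff_rush_def by blast
qed

lemma ratliff_rush_ideal_pow_subset:
  fixes I :: "('n::finite, 'k::field) mpoly set"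
  assumes good: "good_ideal I"
    and cancel: "\<And>\<gamma> N. (\<And>i. mono (\<gamma> + axis i (N * dexp I i)) \<in> ideal_pow I (k + N)) \<Longrightarrow>
      mono \<gamma> \<in> ideal_pow I k"
  shows "ratliff_rush (ideal_pow I k) \<subseteq> ideal_pow I k"
proof
  fix f assume "f \<in> ratliff_rush (ideal_pow I k)"
  then obtain s where f: "f \<in> colon (ideal_pow (ideal_pow I k) (s + 1)) (ideal_pow (ideal_pow I k) s)"
    unfolding ratliff_rush_def by blast
  obtain E where E: "I = ideal_gen (mono ` E)"
    using good_ideal_monomial[OF good] .
  have shifted: "f * mono (axis i (k * s * dexp I i)) \<in> ideal_pow I (k + k * s)" for i
  proof -
    have "(\<lambda>j. s * axis i (k * dexp I i) j) = axis i (k * s * dexp I i)"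
      by (simp add: axis_def fun_eq_iff)
    then have "mono (axis i (k * s * dexp I i)) \<in> ideal_pow (ideal_pow I k) s"
      using power_in_ideal_pow[OF mono_axis_dexp_multiple_in_pow[OF good], of i k s]
      by (simp add: mono_power)
    then have "f * mono (axis i (k * s * dexp I i)) \<in> ideal_pow (ideal_pow I k) (s + 1)"
      using f by (simp add: colon_def)
    moreover have "k * (s + 1) = k + k * s"
      by simp
    ultimately show ?thesis
      using ideal_pow_ideal_pow_subset[of I k "s + 1"] by auto
  qed
  show "f \<in> ideal_pow I k"
  proof (rule in_ideal_if_monos_in[OF is_ideal_ideal_pow])
    fix \<gamma> assume "\<gamma> \<in> Poly_Mapping.keys f"
    show "mono \<gamma> \<in> ideal_pow I k"
    proof (rule cancel)
      fix i
      show "mono (\<gamma> + axis i (k * s * dexp I i)) \<in> ideal_pow I (k + k * s)"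
        using mono_key_in_ideal_pow[OF E shifted keys_mult_mono[OF \<open>\<gamma> \<in> Poly_Mapping.keys f\<close>]] .
    qed
  qed
qed

theorem mainTheorem17:
  fixes I :: "('n::finite, 'k::field) mpoly set"
    and r :: nat
    and v :: "nat \<Rightarrow> ('n \<Rightarrow> nat)"
    and S :: "nat \<Rightarrow> 'n set"
    and L :: nat
  assumes good: "good_ideal I"
    and cover: "(\<Union>j<r. cone (v j) (S j)) = UNIV"
    and disj: "\<And>j j'. j < r \<Longrightarrow> j' < r \<Longrightarrow> j \<noteq> j' \<Longrightarrow> cone (v j) (S j) \<inter> cone (v j') (S j') = {}"
    and const: "\<And>j a b. j < r \<Longrightarrow> a \<in> cone (v j) (S j) \<Longrightarrow> b \<in> cone (v j) (S j) \<Longrightarrow> ideal_at I a = ideal_at I b"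
    and L_def: "L = Max ((\<lambda>j. \<Sum>i\<in>UNIV. v j i) ` {..<r})"
    and zero_dim: "\<And>j. j < r \<Longrightarrow> cone_dim (S j) = 0 \<Longrightarrow> (\<Sum>i\<in>UNIV. v j i) < L"
  shows "\<forall>k::nat. k \<ge> L + 1 \<longrightarrow> ratliff_rush (ideal_pow I k) = ideal_pow I k"
proof (intro allI impI)
  \<comment> \<open>Neither the disjointness of the cones nor the value of \<open>L\<close> is used: it suffices that
    zero-dimensional cones have vertex sum below \<open>L\<close>.\<close>
  fix k :: nat
  assume k: "k \<ge> L + 1"
  show "ratliff_rush (ideal_pow I k) = ideal_pow I k"
  proof (rule antisym)
    show "ratliff_rush (ideal_pow I k) \<subseteq> ideal_pow I k"
      using mono_in_ideal_pow_if_shifts_in[OF good cover const zero_dim k]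
      by (rule ratliff_rush_ideal_pow_subset[OF good])
  qed (rule ideal_subset_ratliff_rush)
qed

end
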